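(* Let $\mu_1\ge\mu_2$ be positive integers and let $n\ge \mu_1+\mu_2$ be an integer. Put $j=\mu_2+1$ and $k=\mu_1-\mu_2+1$. Then the total number of standard Young tableaux of skew shape $\lambda/(\mu_1,\mu_2)$, summed over all partitions $\lambda$ of $n$ having at most three parts (and containing $(\mu_1,\mu_2)$), filled with the numbers $1,2,\ldots,n-(\mu_1+\mu_2)$, equals \[\sum_i r_{i,j,k}\,M_{i+n-(\mu_1+\mu_2)},\] where $M_m$ is the $m$th Motzkin number and $r_{i,j,k}$ is the coefficient of $x^i$ in the polynomial \[r_{j,k}(x)=r_j(x)r_k(x)-r_{j-1}(x)r_{k-1}(x),\] the polynomials $r_m(x)$ being defined by $r_0(x)=0$ and \[\sum_{m=1}^\infty r_m(x)y^m=\frac{y}{(1-y)\big(1+(1-x)y+y^2\big)}.\]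
   Context: A partition $\lambda=(\lambda_1,\ldots,\lambda_l)$ of $n$ is a weakly decreasing sequence of positive integers summing to $n$; its parts are the $\lambda_i$. For partitions $\mu\subset\lambda$ (i.e. $\mu_i\le\lambda_i$ for all $i$), a standard Young tableau of skew shape $\lambda/\mu$ is a filling of the boxes of the Young diagram of $\lambda$ not in the Young diagram of $\mu$ with the numbers $1,2,\ldots,|\lambda|-|\mu|$, each used once, so that entries increase from left to right along rows and from top to bottom down columns. The Motzkin numbers are $M_m=\sum_{t=0}^{\lfloor m/2\rfloor}\frac{m!}{t!(t+1)!(m-2t)!}$, with generating function $\sum_{m\ge0}M_mx^m=\frac{1-x-\sqrt{1-2x-3x^2}}{2x^2}$. Equivalently, $r_{j,k}(x)$ is the coefficient of $y^jz^k$ in $\frac{yz(1-yz)}{(1-y)(1+(1-x)y+y^2)(1-z)(1+(1-x)z+z^2)}$. *)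

theory Defs
  imports Main "HOL-Computational_Algebra.Polynomial" "HOL-Computational_Algebra.Formal_Power_Series"
begin

definition is_partition :: "nat list \<Rightarrow> nat \<Rightarrow> bool" where
  "is_partition lam n \<longleftrightarrow> sorted_wrt (\<ge>) lam \<and> (\<forall>x\<in>set lam. 0 < x) \<and> sum_list lam = n"

definition part_contains :: "nat list \<Rightarrow> nat list \<Rightarrow> bool" where
  "part_contains lam mu \<longleftrightarrow> length mu \<le> length lam \<and> (\<forall>i<length mu. mu ! i \<le> lam ! i)"

(* boxes (row, column), 0-indexed *)
definition young_diagram :: "nat list \<Rightarrow> (nat \<times> nat) set" where
  "young_diagram lam = {(i, j). i < length lam \<and> j < lam ! i}"

definition skew_diagram :: "nat list \<Rightarrow> nat list \<Rightarrow> (nat \<times> nat) set" where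
  "skew_diagram lam mu = young_diagram lam - young_diagram mu"

definition skew_SYT :: "nat list \<Rightarrow> nat list \<Rightarrow> ((nat \<times> nat) \<Rightarrow> nat) set" where
  "skew_SYT lam mu = {T.
     bij_betw T (skew_diagram lam mu) {1..card (skew_diagram lam mu)} \<and>
     (\<forall>b. b \<notin> skew_diagram lam mu \<longrightarrow> T b = 0) \<and>
     (\<forall>i j j'. (i, j) \<in> skew_diagram lam mu \<and> (i, j') \<in> skew_diagram lam mu \<and> j < j'
        \<longrightarrow> T (i, j) < T (i, j')) \<and>
     (\<forall>i i' j. (i, j) \<in> skew_diagram lam mu \<and> (i', j) \<in> skew_diagram lam mu \<and> i < i'
        \<longrightarrow> T (i, j) < T (i', j))}"

definition motzkin :: "nat \<Rightarrow> nat" where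
  "motzkin m = (\<Sum>t\<le>m div 2. fact m div (fact t * fact (t + 1) * fact (m - 2 * t)))"

(* denominator (1-y)(1+(1-x)y+y^2) as a power series in y over Z[x] *)
definition r_denom :: "int poly fps" where
  "r_denom = (1 - fps_X) * (1 + fps_const (1 - [:0, 1:]) * fps_X + fps_X ^ 2)"

definition r_poly :: "nat \<Rightarrow> int poly" where
  "r_poly m = fps_nth (fps_X * fps_right_inverse r_denom 1) m"

definition r2_poly :: "nat \<Rightarrow> nat \<Rightarrow> int poly" where
  "r2_poly j k = r_poly j * r_poly k - r_poly (j - 1) * r_poly (k - 1)"

end

theory Submission
  imports Defs "HOL-Library.More_List"
begin

text \<open>
  Removing the entry 1 from a standard tableau of shape \<open>\<lambda>/\<mu>\<close> leaves one of shape \<open>\<lambda>/\<mu>'\<close>,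
  where \<open>\<mu>'\<close> is \<open>\<mu>\<close> plus one of its addable cells. Summed over all three-row shapes
  \<open>\<lambda> \<supseteq> \<mu>\<close> with \<open>m\<close> more cells, the number \<open>f(m; a, b)\<close> of tableaux depends only on
  \<open>a = \<mu>1 - \<mu>2\<close> and \<open>b = \<mu>2 - \<mu>3\<close>, and satisfies \<open>f(0; a, b) = 1\<close> and
  \<open>f(m+1; a, b) = f(m; a+1, b) + [a > 0] f(m; a-1, b+1) + [b > 0] f(m; a, b-1)\<close>.

  Let \<open>L\<^sub>m\<close> be the linear functional on \<open>\<int>[x]\<close> with \<open>L\<^sub>m(x^i) = M(i + m)\<close>. The generating
  function gives \<open>r(n+1) = (x - 1) r(n) - r(n-1) + 1\<close>, hence
  \<open>x r(b+1, a+1) = r(b+1, a+2) + r(b+2, a) + r(b, a+1)\<close>, and since \<open>L\<^sub>m\<^sub>+\<^sub>1(p) = L\<^sub>m(x p)\<close> the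
  numbers \<open>L\<^sub>m(r(b+1, a+1))\<close> obey the same recursion. It remains to see \<open>L\<^sub>0(r(j, k)) = 1\<close> for
  \<open>j, k > 0\<close>. The polynomials \<open>q(h) = r(h+1) - r(h)\<close> satisfy \<open>x q(h) = q(h+1) + q(h) + q(h-1)\<close>,
  so \<open>L\<^sub>m(q(h))\<close> counts Motzkin walks of length \<open>m\<close> from height \<open>h\<close> down to \<open>0\<close>. In particular
  \<open>L\<^sub>0(q(h)) = [h = 0]\<close>, which makes the \<open>q(h)\<close> orthonormal for \<open>L\<^sub>0\<close>, so that
  \<open>L\<^sub>0(r(j) r(k)) = min j k\<close>.
\<close>

unbundle fps_syntax

lemma fps_nth_Suc_eq_1_of_one_minus_X_mult:
  fixes G :: "'a::comm_ring_1 fps"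
  assumes "(1 - fps_X) * G = fps_X"
  shows "G $ Suc n = 1"
proof -
  have coeff: "G $ k - (if k = 0 then 0 else G $ (k - 1)) = fps_X $ k" for k
    using arg_cong[OF assms, of "\<lambda>F. F $ k"] by (simp add: left_diff_distrib)
  show ?thesis
  proof (induction n)
    case 0
    show ?case using coeff[of 0] coeff[of 1] by simp
  next
    case (Suc n)
    show ?case using coeff[of "Suc (Suc n)"] Suc.IH by simp
  qed
qed

lemma r_poly_0: "r_poly 0 = 0"
  by (simp add: r_poly_def)

lemma r_poly_1: "r_poly (Suc 0) = 1"
  by (simp add: r_poly_def)

text \<open>For \<open>m = 0\<close> the truncated \<open>m - 1 = 0\<close> is harmless because \<open>r_poly 0 = 0\<close>.\<close>

lemma r_poly_Suc: "r_poly (Suc m) = ([:0, 1:] - 1) * r_poly m - r_poly (m - 1) + 1"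
proof (cases m)
  case 0
  then show ?thesis by (simp add: r_poly_0 r_poly_1)
next
  case (Suc n)
  define F where "F = fps_X * fps_right_inverse r_denom 1"
  define P :: "int poly fps" where "P = 1 + fps_const (1 - [:0, 1:]) * fps_X + fps_X ^ 2"
  have inverse: "r_denom * fps_right_inverse r_denom 1 = 1"
    by (rule fps_right_inverse) (simp add: r_denom_def)
  have "(1 - fps_X) * (P * F) = r_denom * (fps_X * fps_right_inverse r_denom 1)"
    unfolding F_def P_def r_denom_def by (simp only: mult.assoc)
  also have "\<dots> = fps_X"
    by (simp only: mult.left_commute[of r_denom] inverse mult_1_right)
  finally have "(1 - fps_X) * (P * F) = fps_X" .
  then have "(P * F) $ Suc (Suc n) = 1"
    by (rule fps_nth_Suc_eq_1_of_one_minus_X_mult)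
  moreover have "P * F = F + fps_const (1 - [:0, 1:]) * (fps_X * F) + fps_X ^ 2 * F"
    unfolding P_def by (simp add: distrib_right mult.assoc)
  ultimately have "F $ Suc (Suc n) + (1 - [:0, 1:]) * F $ Suc n + F $ n = 1"
    by (simp add: fps_X_power_mult_nth)
  then show ?thesis
    unfolding Suc r_poly_def F_def[symmetric] by (simp add: algebra_simps)
qed

lemma inhomogeneous_rec_identities:
  fixes u :: "nat \<Rightarrow> 'a::comm_ring_1"
  assumes rec: "\<And>m. u (Suc m) = (X - 1) * u m - u (m - 1) + 1"
  shows "X * (u (Suc h) - u h) = (u (Suc (Suc h)) - u (Suc h)) + (u (Suc h) - u h) + (u h - u (h - 1))"
    and "X * (u (Suc j) * u (Suc k) - u j * u k) =
           (u (Suc j) * u (Suc (Suc k)) - u j * u (Suc k)) + (u (Suc (Suc j)) * u k - u (Suc j) * u (k - 1))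
           + (u j * u (Suc k) - u (j - 1) * u k)"
proof -
  have down: "u (m - 1) = (X - 1) * u m - u (Suc m) + 1" for m
    using rec[of m] by (simp add: algebra_simps)
  have up: "u (Suc (Suc m)) = (X - 1) * u (Suc m) - u m + 1" for m
    using rec[of "Suc m"] by simp
  show "X * (u (Suc h) - u h) = (u (Suc (Suc h)) - u (Suc h)) + (u (Suc h) - u h) + (u h - u (h - 1))"
    unfolding up down by (simp add: algebra_simps)
  show "X * (u (Suc j) * u (Suc k) - u j * u k) =
           (u (Suc j) * u (Suc (Suc k)) - u j * u (Suc k)) + (u (Suc (Suc j)) * u k - u (Suc j) * u (k - 1))
           + (u j * u (Suc k) - u (j - 1) * u k)"
    unfolding up down by (simp add: algebra_simps)
qed

lemma r2_poly_rec:
  "[:0, 1:] * r2_poly (Suc j) (Suc k) =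
     r2_poly (Suc j) (Suc (Suc k)) + r2_poly (Suc (Suc j)) k + r2_poly j (Suc k)"
  unfolding r2_poly_def diff_Suc_1 by (rule inhomogeneous_rec_identities(2)[OF r_poly_Suc])

lemma r2_poly_0_right: "r2_poly j 0 = 0"
  by (simp add: r2_poly_def r_poly_0)

lemma r2_poly_0_left: "r2_poly 0 k = 0"
  by (simp add: r2_poly_def r_poly_0)

definition q_poly :: "nat \<Rightarrow> int poly" where
  "q_poly h = r_poly (Suc h) - r_poly h"

lemma q_poly_0: "q_poly 0 = 1"
  by (simp add: q_poly_def r_poly_0 r_poly_1)

lemma q_poly_rec:
  "[:0, 1:] * q_poly h = q_poly (Suc h) + q_poly h + (if h = 0 then 0 else q_poly (h - 1))"
proof -
  have "r_poly h - r_poly (h - 1) = (if h = 0 then 0 else q_poly (h - 1))"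
    by (cases h) (simp_all add: q_poly_def)
  with inhomogeneous_rec_identities(1)[OF r_poly_Suc, of h] show ?thesis
    by (simp add: q_poly_def)
qed

lemma r_poly_eq_sum_q_poly: "r_poly m = (\<Sum>h<m. q_poly h)"
  unfolding q_poly_def by (simp add: sum_lessThan_telescope r_poly_0)

definition moment_functional :: "(nat \<Rightarrow> 'a::comm_semiring_1) \<Rightarrow> 'a poly \<Rightarrow> 'a" where
  "moment_functional \<mu> p = (\<Sum>i\<le>degree p. coeff p i * \<mu> i)"

lemma moment_functional_eq_sum_atMost:
  "degree p \<le> N \<Longrightarrow> moment_functional \<mu> p = (\<Sum>i\<le>N. coeff p i * \<mu> i)"
  unfolding moment_functional_def by (rule sum.mono_neutral_left) (auto simp: coeff_eq_0)

lemma moment_functional_0 [simp]: "moment_functional \<mu> 0 = 0"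
  by (simp add: moment_functional_def)

lemma moment_functional_1 [simp]: "moment_functional \<mu> 1 = \<mu> 0"
  by (simp add: moment_functional_def)

lemma moment_functional_add [simp]:
  "moment_functional \<mu> (p + q) = moment_functional \<mu> p + moment_functional \<mu> q"
proof -
  define N where "N = max (degree p) (degree q)"
  have "degree (p + q) \<le> N"
    unfolding N_def by (rule degree_add_le) auto
  moreover have "degree p \<le> N" "degree q \<le> N"
    unfolding N_def by simp_all
  ultimately show ?thesis
    by (simp add: moment_functional_eq_sum_atMost[of _ N] sum.distrib distrib_right)
qed

lemma moment_functional_minus [simp]:
  fixes \<mu> :: "nat \<Rightarrow> 'a::comm_ring_1"
  shows "moment_functional \<mu> (- p) = - moment_functional \<mu> p"
  by (simp add: moment_functional_def sum_negf)

lemma moment_functional_diff [simp]: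
  fixes \<mu> :: "nat \<Rightarrow> 'a::comm_ring_1"
  shows "moment_functional \<mu> (p - q) = moment_functional \<mu> p - moment_functional \<mu> q"
  using moment_functional_add[of \<mu> p "- q"] by simp

lemma moment_functional_sum:
  "moment_functional \<mu> (sum f A) = (\<Sum>a\<in>A. moment_functional \<mu> (f a))"
  by (induction A rule: infinite_finite_induct) simp_all

lemma moment_functional_monom_mult:
  "moment_functional \<mu> ([:0, 1:] * p) = moment_functional (\<lambda>i. \<mu> (Suc i)) p"
proof -
  have "moment_functional \<mu> (pCons 0 p) = (\<Sum>i\<le>Suc (degree p). coeff (pCons 0 p) i * \<mu> i)"
    by (rule moment_functional_eq_sum_atMost) (rule degree_pCons_le)
  also have "\<dots> = moment_functional (\<lambda>i. \<mu> (Suc i)) p"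
    unfolding moment_functional_def by (subst sum.atMost_Suc_shift) simp
  finally show ?thesis by simp
qed

fun dyck_walks :: "nat \<Rightarrow> nat \<Rightarrow> nat" where
  "dyck_walks 0 h = (if h = 0 then 1 else 0)"
| "dyck_walks (Suc n) h = dyck_walks n (Suc h) + (if h = 0 then 0 else dyck_walks n (h - 1))"

lemma dyck_walks_odd: "odd (n + h) \<Longrightarrow> dyck_walks n h = 0"
proof (induction n arbitrary: h)
  case 0
  then show ?case by (cases h) auto
next
  case (Suc n)
  then show ?case by (cases h) auto
qed

definition int_choose :: "nat \<Rightarrow> int \<Rightarrow> int" where
  "int_choose n k = (if k < 0 then 0 else int (n choose nat k))"

lemma int_choose_Suc: "int_choose (Suc n) k = int_choose n k + int_choose n (k - 1)"
proof (cases "k \<le> 0")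
  case True
  then show ?thesis by (cases "k = 0") (auto simp: int_choose_def)
next
  case False
  define j where "j = nat (k - 1)"
  have k: "k = int (Suc j)"
    using False unfolding j_def by simp
  show ?thesis
    unfolding k by (simp add: int_choose_def nat_add_distrib)
qed

lemma int_choose_symmetric_middle:
  assumes "int (Suc n) = 2 * k"
  shows "int_choose n k = int_choose n (k - 1)"
proof -
  define t where "t = nat (k - 1)"
  have t: "k = int (Suc t)" and n: "n = 2 * t + 1"
    using assms unfolding t_def by linarith+
  have "n choose Suc t = n choose t"
    using binomial_symmetric[of "Suc t" n] by (simp add: n)
  then show ?thesis by (simp add: t int_choose_def nat_add_distrib)
qed

lemma dyck_walks_closed_form:
  assumes "even (n + h)"
  shows "int (dyck_walks n h) =
           int_choose n ((int n - int h) div 2) - int_choose n ((int n - int h) div 2 - 1)"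
  using assms
proof (induction n arbitrary: h)
  case 0
  then show ?case
    by (cases "h = 0") (auto simp: int_choose_def elim!: evenE)
next
  case (Suc n)
  define k where "k = (int (Suc n) - int h) div 2"
  have "even (int (Suc n + h))"
    using Suc.prems by simp
  then have "even (int (Suc n) - int h)"
    by simp
  then have k: "int (Suc n) - int h = 2 * k"
    unfolding k_def by simp
  have k': "(int (Suc n) - int h) div 2 = k"
    using k by simp
  have up: "int (dyck_walks n (Suc h)) = int_choose n (k - 1) - int_choose n (k - 1 - 1)"
  proof -
    have "(int n - int (Suc h)) div 2 = k - 1"
      using k by linarith
    with Suc.IH[of "Suc h"] Suc.prems show ?thesis by simp
  qed
  show ?case
  proof (cases "h = 0")
    case True
    \<comment> \<open>there is no step down from height \<open>0\<close>; the symmetry of the middle binomial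
      coefficients of the odd row \<open>n\<close> makes up for the missing term\<close>
    have "int_choose n k = int_choose n (k - 1)"
      using k True by (intro int_choose_symmetric_middle) simp
    with up True show ?thesis
      unfolding k' int_choose_Suc by simp
  next
    case False
    have down: "int (dyck_walks n (h - 1)) = int_choose n k - int_choose n (k - 1)"
    proof -
      have "(int n - int (h - 1)) div 2 = k"
        using k False by linarith
      moreover have "even (n + (h - 1))"
        using Suc.prems False by (cases h) auto
      ultimately show ?thesis using Suc.IH[of "h - 1"] by simp
    qed
    with up False show ?thesis
      unfolding k' int_choose_Suc by simp
  qed
qed

lemma dyck_walks_catalan: "dyck_walks (2 * t) 0 * (fact t * fact (Suc t)) = fact (2 * t)"
proof (cases t)
  case 0
  then show ?thesis by simp
next
  case (Suc s)
  have walks: "int (dyck_walks (2 * t) 0) = int (2 * t choose t) - int (2 * t choose s)"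
  proof -
    have "int t - 1 = int s"
      using Suc by simp
    then show ?thesis
      using dyck_walks_closed_form[of "2 * t" 0] by (simp add: int_choose_def)
  qed
  have central: "fact t * fact t * (2 * t choose t) = (fact (2 * t) :: nat)"
    using binomial_fact_lemma[of t "2 * t"] by simp
  have below: "fact s * fact (Suc t) * (2 * t choose s) = (fact (2 * t) :: nat)"
    using binomial_fact_lemma[of s "2 * t"] Suc by (simp add: numeral_2_eq_2)
  have "fact t = t * (fact s :: nat)"
    using Suc by simp
  then have "int (dyck_walks (2 * t) 0) * int (fact t * fact (Suc t)) =
      int (Suc t) * int (fact t * fact t * (2 * t choose t))
      - int t * int (fact s * fact (Suc t) * (2 * t choose s))"
    unfolding walks by (simp add: algebra_simps)
  also have "\<dots> = int (fact (2 * t))"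
    unfolding central below by (simp add: algebra_simps)
  finally show ?thesis
    by (simp only: of_nat_mult[symmetric] of_nat_eq_iff)
qed

text \<open>Motzkin walks (steps \<open>\<plus>1\<close>, \<open>0\<close>, \<open>-1\<close>) from height \<open>h\<close> to \<open>0\<close>, classified by the
  positions of their \<open>n\<close> non-level steps.\<close>

definition motzkin_walks :: "nat \<Rightarrow> nat \<Rightarrow> nat" where
  "motzkin_walks m h = (\<Sum>n\<le>m. (m choose n) * dyck_walks n h)"

lemma motzkin_walks_0: "motzkin_walks 0 h = (if h = 0 then 1 else 0)"
  by (simp add: motzkin_walks_def)

lemma motzkin_walks_Suc:
  "motzkin_walks (Suc m) h =
     motzkin_walks m (Suc h) + motzkin_walks m h + (if h = 0 then 0 else motzkin_walks m (h - 1))"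
proof -
  have "motzkin_walks (Suc m) h = dyck_walks 0 h + (\<Sum>n\<le>m. (Suc m choose Suc n) * dyck_walks (Suc n) h)"
    unfolding motzkin_walks_def by (subst sum.atMost_Suc_shift) simp
  also have "\<dots> = (dyck_walks 0 h + (\<Sum>n\<le>m. (m choose Suc n) * dyck_walks (Suc n) h))
      + (\<Sum>n\<le>m. (m choose n) * dyck_walks (Suc n) h)"
    by (simp add: sum.distrib distrib_right)
  also have "dyck_walks 0 h + (\<Sum>n\<le>m. (m choose Suc n) * dyck_walks (Suc n) h) = motzkin_walks m h"
    using sum.atMost_Suc_shift[of "\<lambda>n. (m choose n) * dyck_walks n h" m]
    by (simp add: motzkin_walks_def binomial_eq_0 del: dyck_walks.simps)
  also have "(\<Sum>n\<le>m. (m choose n) * dyck_walks (Suc n) h) =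
      motzkin_walks m (Suc h) + (if h = 0 then 0 else motzkin_walks m (h - 1))"
    by (simp add: motzkin_walks_def sum.distrib distrib_left)
  finally show ?thesis by simp
qed

lemma sum_atMost_even:
  fixes f :: "nat \<Rightarrow> 'a::comm_monoid_add"
  assumes "\<And>n. odd n \<Longrightarrow> f n = 0"
  shows "(\<Sum>n\<le>m. f n) = (\<Sum>t\<le>m div 2. f (2 * t))"
proof -
  have "(\<Sum>n\<le>m. f n) = (\<Sum>n\<in>(\<lambda>t. 2 * t) ` {..m div 2}. f n)"
  proof (rule sum.mono_neutral_right)
    show "\<forall>n\<in>{..m} - (\<lambda>t. 2 * t) ` {..m div 2}. f n = 0"
    proof
      fix n
      assume n: "n \<in> {..m} - (\<lambda>t. 2 * t) ` {..m div 2}"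
      have "odd n"
      proof
        assume "even n"
        then have "n = 2 * (n div 2)" and "n div 2 \<le> m div 2"
          using n by (simp_all add: div_le_mono)
        with n show False by blast
      qed
      then show "f n = 0" by (rule assms)
    qed
  qed auto
  also have "\<dots> = (\<Sum>t\<le>m div 2. f (2 * t))"
    by (subst sum.reindex) (auto simp: inj_on_def)
  finally show ?thesis .
qed

lemma motzkin_walks_eq_motzkin: "motzkin_walks m 0 = motzkin m"
proof -
  have summand: "(m choose (2 * t)) * dyck_walks (2 * t) 0 =
      fact m div (fact t * fact (t + 1) * fact (m - 2 * t))" if "2 * t \<le> m" for t
  proof -
    have "fact m = fact (2 * t) * fact (m - 2 * t) * (m choose (2 * t))"
      using binomial_fact_lemma[OF that] by simp
    also have "\<dots> = (m choose (2 * t)) * dyck_walks (2 * t) 0 * (fact t * fact (t + 1) * fact (m - 2 * t))"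
      unfolding dyck_walks_catalan[of t, symmetric] by (simp del: fact_Suc add: ac_simps)
    finally have "fact m = (m choose (2 * t)) * dyck_walks (2 * t) 0 * (fact t * fact (t + 1) * fact (m - 2 * t))" .
    then show ?thesis by simp
  qed
  have "motzkin_walks m 0 = (\<Sum>t\<le>m div 2. (m choose (2 * t)) * dyck_walks (2 * t) 0)"
    unfolding motzkin_walks_def by (rule sum_atMost_even) (simp add: dyck_walks_odd)
  also have "\<dots> = motzkin m"
    unfolding motzkin_def by (intro sum.cong refl summand) auto
  finally show ?thesis .
qed

definition motzkin_moments :: "nat \<Rightarrow> nat \<Rightarrow> int" where
  "motzkin_moments m i = int (motzkin (i + m))"

lemma moment_functional_motzkin_monom_mult:
  "moment_functional (motzkin_moments m) ([:0, 1:] * p) = moment_functional (motzkin_moments (Suc m)) p"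
proof -
  have "(\<lambda>i. motzkin_moments m (Suc i)) = motzkin_moments (Suc m)"
    by (simp add: fun_eq_iff motzkin_moments_def)
  then show ?thesis
    unfolding moment_functional_monom_mult by simp
qed

lemma moment_functional_motzkin_q_poly:
  "moment_functional (motzkin_moments m) (q_poly h) = int (motzkin_walks m h)"
proof (induction h arbitrary: m rule: less_induct)
  case (less h)
  show ?case
  proof (cases h)
    case 0
    then show ?thesis
      by (simp add: q_poly_0 motzkin_moments_def motzkin_walks_eq_motzkin)
  next
    case (Suc g)
    have rec: "q_poly (Suc g) = [:0, 1:] * q_poly g - q_poly g - (if g = 0 then 0 else q_poly (g - 1))"
      unfolding q_poly_rec by simp
    have "moment_functional (motzkin_moments m) (q_poly (Suc g)) =
        moment_functional (motzkin_moments (Suc m)) (q_poly g) - moment_functional (motzkin_moments m) (q_poly g)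
        - (if g = 0 then 0 else moment_functional (motzkin_moments m) (q_poly (g - 1)))"
      unfolding rec moment_functional_diff moment_functional_motzkin_monom_mult by simp
    also have "\<dots> = int (motzkin_walks (Suc m) g) - motzkin_walks m g
        - (if g = 0 then 0 else motzkin_walks m (g - 1))"
      using less Suc by simp
    also have "\<dots> = int (motzkin_walks m (Suc g))"
      by (simp add: motzkin_walks_Suc)
    finally show ?thesis
      using Suc by simp
  qed
qed

lemma three_term_rec_mult:
  fixes X :: "'a::comm_ring_1"
  assumes "X * u = u1 + u + u0" and "X * v = v1 + v + v0"
  shows "u1 * v = u * v1 + u * v0 - u0 * v"
proof -
  have "u1 * v = (X * u) * v - u * v - u0 * v"
    unfolding assms(1) by (simp add: algebra_simps)
  also have "\<dots> = u * (X * v) - u * v - u0 * v"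
    by (simp add: ac_simps)
  finally show ?thesis
    unfolding assms(2) by (simp add: algebra_simps)
qed

lemma q_poly_orthonormal:
  "moment_functional (motzkin_moments 0) (q_poly a * q_poly b) = (if a = b then 1 else 0)"
proof (induction a arbitrary: b rule: less_induct)
  case (less a)
  define L where "L = moment_functional (motzkin_moments 0)"
  define below where "below h = (if h = 0 then 0 else q_poly (h - 1))" for h
  show ?case
  proof (cases a)
    case 0
    then show ?thesis
      using moment_functional_motzkin_q_poly[of 0 b] by (simp add: q_poly_0 motzkin_walks_0)
  next
    case (Suc c)
    have "q_poly (Suc c) * q_poly b = q_poly c * q_poly (Suc b) + q_poly c * below b - below c * q_poly b"
      using q_poly_rec[of c] q_poly_rec[of b] unfolding below_def by (rule three_term_rec_mult)
    then have "L (q_poly a * q_poly b) = L (q_poly c * q_poly (Suc b)) + L (q_poly c * below b) - L (below c * q_poly b)"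
      by (simp add: L_def Suc)
    moreover have "L (q_poly c * q_poly b') = (if c = b' then 1 else 0)" for b'
      using less Suc by (simp add: L_def)
    moreover have "L (below c * q_poly b) = (if c \<noteq> 0 \<and> c - 1 = b then 1 else 0)"
      using less Suc by (simp add: L_def below_def)
    moreover have "L (q_poly c * below b) = (if b \<noteq> 0 \<and> c = b - 1 then 1 else 0)"
      using less Suc by (simp add: L_def below_def)
    ultimately show ?thesis
      unfolding L_def using Suc by auto
  qed
qed

lemma moment_functional_r_poly_mult:
  "moment_functional (motzkin_moments 0) (r_poly j * r_poly k) = int (min j k)"
proof -
  have "moment_functional (motzkin_moments 0) (r_poly j * r_poly k) =
      (\<Sum>a<j. \<Sum>b<k. moment_functional (motzkin_moments 0) (q_poly a * q_poly b))"
    unfolding r_poly_eq_sum_q_poly sum_product by (simp add: moment_functional_sum)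
  also have "\<dots> = (\<Sum>a<j. if a < k then 1 else 0)"
    by (simp add: q_poly_orthonormal)
  also have "\<dots> = int (min j k)"
    by (induction j) auto
  finally show ?thesis .
qed

lemma moment_functional_r2_poly_0:
  "moment_functional (motzkin_moments 0) (r2_poly (Suc j) (Suc k)) = 1"
  by (simp add: r2_poly_def moment_functional_r_poly_mult)

lemma moment_functional_r2_poly_Suc:
  "moment_functional (motzkin_moments (Suc m)) (r2_poly (Suc j) (Suc k)) =
       moment_functional (motzkin_moments m) (r2_poly (Suc j) (Suc (Suc k)))
     + (if k = 0 then 0 else moment_functional (motzkin_moments m) (r2_poly (Suc (Suc j)) k))
     + (if j = 0 then 0 else moment_functional (motzkin_moments m) (r2_poly j (Suc k)))"
proof -
  have "moment_functional (motzkin_moments (Suc m)) (r2_poly (Suc j) (Suc k)) =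
      moment_functional (motzkin_moments m) (r2_poly (Suc j) (Suc (Suc k)) + r2_poly (Suc (Suc j)) k + r2_poly j (Suc k))"
    unfolding moment_functional_motzkin_monom_mult[symmetric] r2_poly_rec ..
  then show ?thesis
    by (cases j; cases k) (simp_all add: r2_poly_0_left r2_poly_0_right)
qed

definition syt :: "(nat \<times> nat) set \<Rightarrow> ((nat \<times> nat) \<Rightarrow> nat) set" where
  "syt S = {T.
     bij_betw T S {1..card S} \<and>
     (\<forall>b. b \<notin> S \<longrightarrow> T b = 0) \<and>
     (\<forall>i j j'. (i, j) \<in> S \<and> (i, j') \<in> S \<and> j < j' \<longrightarrow> T (i, j) < T (i, j')) \<and>
     (\<forall>i i' j. (i, j) \<in> S \<and> (i', j) \<in> S \<and> i < i' \<longrightarrow> T (i, j) < T (i', j))}"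

lemma skew_SYT_eq_syt: "skew_SYT lam mu = syt (skew_diagram lam mu)"
  by (simp add: skew_SYT_def syt_def)

definition inner_corner :: "(nat \<times> nat) set \<Rightarrow> nat \<times> nat \<Rightarrow> bool" where
  "inner_corner S c \<longleftrightarrow>
     c \<in> S \<and> (\<forall>j. (fst c, j) \<in> S \<longrightarrow> snd c \<le> j) \<and> (\<forall>i. (i, snd c) \<in> S \<longrightarrow> fst c \<le> i)"

lemma syt_eq_0_outside: "T \<in> syt S \<Longrightarrow> b \<notin> S \<Longrightarrow> T b = 0"
  unfolding syt_def by blast

lemma syt_ge_1: "T \<in> syt S \<Longrightarrow> b \<in> S \<Longrightarrow> 1 \<le> T b"
  unfolding syt_def bij_betw_def by auto

lemma syt_row_less: "T \<in> syt S \<Longrightarrow> (i, j) \<in> S \<Longrightarrow> (i, j') \<in> S \<Longrightarrow> j < j' \<Longrightarrow> T (i, j) < T (i, j')"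
  by (simp add: syt_def)

lemma syt_col_less: "T \<in> syt S \<Longrightarrow> (i, j) \<in> S \<Longrightarrow> (i', j) \<in> S \<Longrightarrow> i < i' \<Longrightarrow> T (i, j) < T (i', j)"
  by (simp add: syt_def)

lemma finite_syt: "finite S \<Longrightarrow> finite (syt S)"
  by (rule finite_subset[OF _ finite_set_of_finite_funs[of S "{0..card S}" 0]])
    (auto simp: syt_def bij_betw_def)

lemma syt_empty: "syt {} = {\<lambda>_. 0}"
  by (auto simp: syt_def bij_betw_def)

lemma syt_entry_1_at_inner_corner:
  assumes T: "T \<in> syt S" and "finite S" and "S \<noteq> {}"
  obtains c where "inner_corner S c" and "T c = 1"
proof -
  have "T ` S = {1..card S}"
    using T by (simp add: syt_def bij_betw_def)
  moreover have "1 \<le> card S"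
    using \<open>finite S\<close> \<open>S \<noteq> {}\<close> by (simp add: Suc_le_eq card_gt_0_iff)
  ultimately obtain i j where c: "(i, j) \<in> S" "T (i, j) = 1"
    by (metis atLeastAtMost_iff imageE order_refl surj_pair)
  have "\<not> j' < j" if "(i, j') \<in> S" for j'
    using syt_row_less[OF T that c(1)] syt_ge_1[OF T that] c(2) by auto
  moreover have "\<not> i' < i" if "(i', j) \<in> S" for i'
    using syt_col_less[OF T that c(1)] syt_ge_1[OF T that] c(2) by auto
  ultimately have "inner_corner S (i, j)"
    using c by (auto simp: inner_corner_def not_less)
  with c that show ?thesis by blast
qed

lemma bij_betw_remove_entry_1:
  assumes bij: "bij_betw T S {1..card S}" and c: "c \<in> S" "T c = 1" and "finite S"
  shows "bij_betw (\<lambda>b. if b \<in> S - {c} then T b - 1 else 0) (S - {c}) {1..card (S - {c})}"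
proof -
  have "1 \<le> card S"
    using c \<open>finite S\<close> by (auto simp: Suc_le_eq card_gt_0_iff)
  then have "bij_betw T (S - {c}) ({1..card S} - {1})"
    using c by (intro bij_betw_DiffI[OF bij]) auto
  moreover have "bij_betw (\<lambda>k. k - 1) ({1..card S} - {1}) {1..card (S - {c})}"
    using c \<open>finite S\<close> by (intro bij_betw_byWitness[where f' = Suc]) auto
  ultimately have "bij_betw ((\<lambda>k. k - 1) \<circ> T) (S - {c}) {1..card (S - {c})}"
    by (rule bij_betw_trans)
  then show ?thesis
    by (subst bij_betw_cong[of _ _ "(\<lambda>k. k - 1) \<circ> T"]) simp_all
qed

lemma bij_betw_insert_entry_1:
  assumes bij: "bij_betw T (S - {c}) {1..card (S - {c})}" and "c \<in> S" and "finite S"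
  shows "bij_betw (\<lambda>b. if b = c then 1 else if b \<in> S then Suc (T b) else 0) S {1..card S}"
    (is "bij_betw ?T' _ _")
proof -
  have "1 \<le> card S"
    using \<open>c \<in> S\<close> \<open>finite S\<close> by (auto simp: Suc_le_eq card_gt_0_iff)
  then have "bij_betw (Suc \<circ> T) (S - {c}) {2..card S}"
    using \<open>c \<in> S\<close> \<open>finite S\<close> by (intro bij_betw_trans[OF bij]) simp
  then have "bij_betw ?T' (S - {c}) {2..card S}"
    by (subst bij_betw_cong[of _ _ "Suc \<circ> T"]) simp_all
  then have "bij_betw ?T' ((S - {c}) \<union> {c}) ({2..card S} \<union> {1})"
    by (intro bij_betw_combine) auto
  moreover have "(S - {c}) \<union> {c} = S" and "{2..card S} \<union> {1} = {1..card S}"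
    using \<open>c \<in> S\<close> \<open>1 \<le> card S\<close> by auto
  ultimately show ?thesis
    by simp
qed

lemma syt_remove_entry_1:
  assumes T: "T \<in> syt S" and c: "c \<in> S" "T c = 1" and "finite S"
  shows "(\<lambda>b. if b \<in> S - {c} then T b - 1 else 0) \<in> syt (S - {c})" (is "?T' \<in> _")
proof -
  have bij: "bij_betw T S {1..card S}"
    using T by (simp add: syt_def)
  have less: "?T' b < ?T' b'" if "T b < T b'" "b \<in> S - {c}" "b' \<in> S - {c}" for b b'
  proof -
    have "T b \<noteq> T c"
      using bij c(1) \<open>b \<in> S - {c}\<close> by (auto simp: bij_betw_def inj_on_def)
    with that c(2) syt_ge_1[OF T, of b] show ?thesis
      by simp
  qed
  show ?thesis
    unfolding syt_def mem_Collect_eq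
  proof (intro conjI allI impI)
    show "bij_betw ?T' (S - {c}) {1..card (S - {c})}"
      using bij c \<open>finite S\<close> by (rule bij_betw_remove_entry_1)
  next
    fix i j j'
    assume "(i, j) \<in> S - {c} \<and> (i, j') \<in> S - {c} \<and> j < j'"
    then show "?T' (i, j) < ?T' (i, j')"
      by (intro less syt_row_less[OF T]) auto
  next
    fix i i' j
    assume "(i, j) \<in> S - {c} \<and> (i', j) \<in> S - {c} \<and> i < i'"
    then show "?T' (i, j) < ?T' (i', j)"
      by (intro less syt_col_less[OF T]) auto
  qed auto
qed

lemma syt_insert_entry_1:
  assumes T: "T \<in> syt (S - {c})" and c: "inner_corner S c" and "finite S"
  shows "(\<lambda>b. if b = c then 1 else if b \<in> S then Suc (T b) else 0) \<in> syt S" (is "?T' \<in> _")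
proof -
  have "c \<in> S"
    using c by (simp add: inner_corner_def)
  have less: "?T' b < ?T' b'" if "b \<in> S" "b' \<in> S - {c}" "b = c \<or> T b < T b'" for b b'
    using that syt_ge_1[OF T \<open>b' \<in> S - {c}\<close>] by auto
  show ?thesis
    unfolding syt_def mem_Collect_eq
  proof (intro conjI allI impI)
    show "bij_betw ?T' S {1..card S}"
      using T \<open>c \<in> S\<close> \<open>finite S\<close> by (intro bij_betw_insert_entry_1) (simp add: syt_def)
  next
    fix i j j'
    assume ij: "(i, j) \<in> S \<and> (i, j') \<in> S \<and> j < j'"
    moreover from ij c have "(i, j') \<noteq> c"
      by (auto simp: inner_corner_def)
    ultimately show "?T' (i, j) < ?T' (i, j')"
      using syt_row_less[OF T, of i j j'] by (intro less) auto
  next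
    fix i i' j
    assume ij: "(i, j) \<in> S \<and> (i', j) \<in> S \<and> i < i'"
    moreover from ij c have "(i', j) \<noteq> c"
      by (auto simp: inner_corner_def)
    ultimately show "?T' (i, j) < ?T' (i', j)"
      using syt_col_less[OF T, of i j i'] by (intro less) auto
  qed (use \<open>c \<in> S\<close> in auto)
qed

lemma card_syt_entry_1:
  assumes "inner_corner S c" and "finite S"
  shows "card {T \<in> syt S. T c = 1} = card (syt (S - {c}))"
proof (rule bij_betw_same_card)
  have "c \<in> S"
    using assms by (simp add: inner_corner_def)
  define shift_down :: "(nat \<times> nat \<Rightarrow> nat) \<Rightarrow> nat \<times> nat \<Rightarrow> nat"
    where "shift_down T = (\<lambda>b. if b \<in> S - {c} then T b - 1 else 0)" for T
  define shift_up :: "(nat \<times> nat \<Rightarrow> nat) \<Rightarrow> nat \<times> nat \<Rightarrow> nat"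
    where "shift_up T = (\<lambda>b. if b = c then 1 else if b \<in> S then Suc (T b) else 0)" for T
  show "bij_betw shift_down {T \<in> syt S. T c = 1} (syt (S - {c}))"
  proof (rule bij_betw_byWitness[where f' = shift_up])
    show "\<forall>T\<in>{T \<in> syt S. T c = 1}. shift_up (shift_down T) = T"
      using syt_eq_0_outside syt_ge_1 by (fastforce simp: fun_eq_iff shift_up_def shift_down_def)
    show "\<forall>T\<in>syt (S - {c}). shift_down (shift_up T) = T"
      using syt_eq_0_outside by (fastforce simp: fun_eq_iff shift_up_def shift_down_def)
    show "shift_down ` {T \<in> syt S. T c = 1} \<subseteq> syt (S - {c})"
      unfolding shift_down_def using \<open>c \<in> S\<close> assms(2)
      by (intro image_subsetI syt_remove_entry_1) auto
    show "shift_up ` syt (S - {c}) \<subseteq> {T \<in> syt S. T c = 1}"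
      unfolding shift_up_def using assms
      by (intro image_subsetI) (simp add: syt_insert_entry_1)
  qed
qed

lemma card_syt_eq_sum_inner_corners:
  assumes "finite S" and "S \<noteq> {}"
  shows "card (syt S) = (\<Sum>c\<in>{c. inner_corner S c}. card (syt (S - {c})))"
proof -
  have corners_finite: "finite {c. inner_corner S c}"
    using \<open>finite S\<close> by (rule rev_finite_subset) (auto simp: inner_corner_def)
  have "syt S = (\<Union>c\<in>{c. inner_corner S c}. {T \<in> syt S. T c = 1})"
    using syt_entry_1_at_inner_corner[OF _ assms] by blast
  then have "card (syt S) = card (\<Union>c\<in>{c. inner_corner S c}. {T \<in> syt S. T c = 1})"
    by simp
  also have "\<dots> = (\<Sum>c\<in>{c. inner_corner S c}. card {T \<in> syt S. T c = 1})"
  proof (intro card_UN_disjoint corners_finite ballI impI)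
    show "finite {T \<in> syt S. T c = 1}" for c
      using finite_syt[OF \<open>finite S\<close>] by simp
    show "{T \<in> syt S. T c = 1} \<inter> {T \<in> syt S. T c' = 1} = {}"
      if "c \<in> {c. inner_corner S c}" "c' \<in> {c. inner_corner S c}" "c \<noteq> c'" for c c'
    proof -
      have "c \<in> S" "c' \<in> S"
        using that by (simp_all add: inner_corner_def)
      moreover have "inj_on T S" if "T \<in> syt S" for T
        using that by (simp add: syt_def bij_betw_def)
      ultimately have ne: "T c \<noteq> T c'" if "T \<in> syt S" for T
        using that \<open>c \<noteq> c'\<close> by (metis inj_onD)
      show ?thesis
        by (auto dest: ne)
    qed
  qed
  also have "\<dots> = (\<Sum>c\<in>{c. inner_corner S c}. card (syt (S - {c})))"
    using \<open>finite S\<close> by (intro sum.cong refl card_syt_entry_1) simp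
  finally show ?thesis .
qed

text \<open>A partition with at most \<open>r\<close> rows is encoded by its row lengths \<open>i \<mapsto> \<lambda>\<^sub>i\<close>, which vanish
  from row \<open>r\<close> on.\<close>

definition skew_cells :: "(nat \<Rightarrow> nat) \<Rightarrow> (nat \<Rightarrow> nat) \<Rightarrow> (nat \<times> nat) set" where
  "skew_cells L M = {(i, j). M i \<le> j \<and> j < L i}"

definition shapes_above :: "nat \<Rightarrow> (nat \<Rightarrow> nat) \<Rightarrow> nat \<Rightarrow> (nat \<Rightarrow> nat) set" where
  "shapes_above r M m =
     {L. antimono L \<and> (\<forall>i\<ge>r. L i = 0) \<and> (\<forall>i. M i \<le> L i) \<and> (\<Sum>i<r. L i) = (\<Sum>i<r. M i) + m}"

definition skew_syt_count :: "nat \<Rightarrow> (nat \<Rightarrow> nat) \<Rightarrow> nat \<Rightarrow> nat" where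
  "skew_syt_count r M m = (\<Sum>L\<in>shapes_above r M m. card (syt (skew_cells L M)))"

lemma finite_skew_cells:
  assumes "antimono L" and "\<forall>i\<ge>r. L i = 0"
  shows "finite (skew_cells L M)"
proof (rule finite_subset)
  show "skew_cells L M \<subseteq> {..<r} \<times> {..<L 0}"
    using assms by (auto simp: skew_cells_def not_less[symmetric] antimonoD
        intro: less_le_trans[OF _ antimonoD[OF assms(1)]])
qed simp

lemma finite_shapes_above: "finite (shapes_above r M m)"
proof (rule finite_subset)
  let ?N = "(\<Sum>i<r. M i) + m"
  have "L i \<le> ?N" if "L \<in> shapes_above r M m" and "i < r" for L i
    using that member_le_sum[of i "{..<r}" L] by (simp add: shapes_above_def)
  then show "shapes_above r M m \<subseteq> {L. \<forall>i. (i \<in> {..<r} \<longrightarrow> L i \<in> {..?N}) \<and> (i \<notin> {..<r} \<longrightarrow> L i = 0)}"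
    by (auto simp: shapes_above_def)
qed (rule finite_set_of_finite_funs; simp)

lemma inner_corner_skew_cells_iff:
  assumes "antimono L" and "antimono M" and "\<forall>i. M i \<le> L i"
  shows "inner_corner (skew_cells L M) c \<longleftrightarrow> (\<exists>i. c = (i, M i) \<and> M i < L i \<and> (i = 0 \<or> M i < M (i - 1)))"
proof
  assume corner: "inner_corner (skew_cells L M) c"
  obtain i j where c: "c = (i, j)"
    by fastforce
  have cell: "M i \<le> j" "j < L i"
    using corner c by (simp_all add: inner_corner_def skew_cells_def)
  then have "j = M i"
    using corner c by (fastforce simp: inner_corner_def skew_cells_def)
  moreover have "i = 0 \<or> M i < M (i - 1)"
  proof (rule ccontr)
    assume "\<not> (i = 0 \<or> M i < M (i - 1))"
    then have "i - 1 < i" and "M (i - 1) \<le> j"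
      using \<open>j = M i\<close> by auto
    moreover have "j < L (i - 1)"
      using cell antimonoD[OF assms(1), of "i - 1" i] by simp
    ultimately show False
      using corner c by (fastforce simp: inner_corner_def skew_cells_def)
  qed
  ultimately show "\<exists>i. c = (i, M i) \<and> M i < L i \<and> (i = 0 \<or> M i < M (i - 1))"
    using c cell by blast
next
  assume "\<exists>i. c = (i, M i) \<and> M i < L i \<and> (i = 0 \<or> M i < M (i - 1))"
  then obtain i where c: "c = (i, M i)" and "M i < L i" and addable: "i = 0 \<or> M i < M (i - 1)"
    by blast
  have "i \<le> i'" if "M i' \<le> M i" for i'
  proof (rule ccontr)
    assume "\<not> i \<le> i'"
    then have "M (i - 1) \<le> M i'" and "i \<noteq> 0"
      using antimonoD[OF assms(2), of i' "i - 1"] by auto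
    with addable that show False by simp
  qed
  then show "inner_corner (skew_cells L M) c"
    using c \<open>M i < L i\<close> by (auto simp: inner_corner_def skew_cells_def)
qed

lemma skew_cells_remove_inner_corner:
  "skew_cells L M - {(i, M i)} = skew_cells L (M(i := Suc (M i)))"
  by (auto simp: skew_cells_def split: if_splits)

lemma sum_lessThan_fun_upd_Suc:
  fixes M :: "nat \<Rightarrow> nat"
  assumes "i < r"
  shows "(\<Sum>j<r. (M(i := Suc (M i))) j) = (\<Sum>j<r. M j) + 1"
proof -
  have "(\<Sum>j<r. (M(i := Suc (M i))) j) = Suc (M i) + (\<Sum>j\<in>{..<r} - {i}. (M(i := Suc (M i))) j)"
    using assms by (subst sum.remove[of _ i]) auto
  also have "(\<Sum>j\<in>{..<r} - {i}. (M(i := Suc (M i))) j) = (\<Sum>j\<in>{..<r} - {i}. M j)"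
    by (rule sum.cong) auto
  also have "Suc (M i) + (\<Sum>j\<in>{..<r} - {i}. M j) = (\<Sum>j<r. M j) + 1"
    using assms by (subst (2) sum.remove[of _ i]) auto
  finally show ?thesis .
qed

lemma antimono_fun_upd_Suc:
  fixes M :: "nat \<Rightarrow> nat"
  assumes "antimono M" and "i = 0 \<or> M i < M (i - 1)"
  shows "antimono (M(i := Suc (M i)))"
  unfolding antimono_iff_le_Suc
proof
  fix n
  have "M (Suc n) \<le> M n"
    using assms(1) by (simp add: antimono_iff_le_Suc)
  moreover have "Suc n = i \<Longrightarrow> Suc (M i) \<le> M n"
    using assms(2) by auto
  ultimately show "(M(i := Suc (M i))) (Suc n) \<le> (M(i := Suc (M i))) n"
    by auto
qed

lemma shapes_above_Suc_filter:
  assumes "i < r"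
  shows "{L \<in> shapes_above r M (Suc m). M i < L i} = shapes_above r (M(i := Suc (M i))) m"
  using assms unfolding shapes_above_def sum_lessThan_fun_upd_Suc[OF assms]
  by (auto simp: Suc_le_eq)

lemma card_syt_skew_cells_eq_sum_addable:
  assumes L: "antimono L" "\<forall>i\<ge>r. L i = 0" and M: "antimono M" "\<forall>i. M i \<le> L i"
    and "skew_cells L M \<noteq> {}"
  shows "card (syt (skew_cells L M)) = (\<Sum>i | i < r \<and> (i = 0 \<or> M i < M (i - 1)).
           if M i < L i then card (syt (skew_cells L (M(i := Suc (M i))))) else 0)"
proof -
  define I where "I = {i. i < r \<and> (i = 0 \<or> M i < M (i - 1))}"
  have "i < r" if "M i < L i" for i
    using L(2) that by (cases "i < r") auto
  then have corners: "{c. inner_corner (skew_cells L M) c} = (\<lambda>i. (i, M i)) ` {i \<in> I. M i < L i}"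
    by (auto simp: inner_corner_skew_cells_iff[OF L(1) M] I_def)
  have "card (syt (skew_cells L M)) =
      (\<Sum>c\<in>{c. inner_corner (skew_cells L M) c}. card (syt (skew_cells L M - {c})))"
    using assms(5) by (intro card_syt_eq_sum_inner_corners finite_skew_cells[OF L])
  also have "\<dots> = (\<Sum>i\<in>{i \<in> I. M i < L i}. card (syt (skew_cells L (M(i := Suc (M i))))))"
    unfolding corners by (subst sum.reindex) (auto simp: inj_on_def skew_cells_remove_inner_corner)
  also have "\<dots> = (\<Sum>i\<in>I. if M i < L i then card (syt (skew_cells L (M(i := Suc (M i))))) else 0)"
    by (rule sum.inter_filter) (simp add: I_def)
  finally show ?thesis
    by (simp add: I_def)
qed

lemma skew_syt_count_Suc:
  assumes "antimono M"
  shows "skew_syt_count r M (Suc m) =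
    (\<Sum>i | i < r \<and> (i = 0 \<or> M i < M (i - 1)). skew_syt_count r (M(i := Suc (M i))) m)"
proof -
  define I where "I = {i. i < r \<and> (i = 0 \<or> M i < M (i - 1))}"
  have "card (syt (skew_cells L M)) =
      (\<Sum>i\<in>I. if M i < L i then card (syt (skew_cells L (M(i := Suc (M i))))) else 0)"
    if "L \<in> shapes_above r M (Suc m)" for L
  proof -
    have L: "antimono L" "\<forall>i\<ge>r. L i = 0" "\<forall>i. M i \<le> L i" "(\<Sum>i<r. L i) = (\<Sum>i<r. M i) + Suc m"
      using that by (simp_all add: shapes_above_def)
    have "skew_cells L M \<noteq> {}"
    proof
      assume "skew_cells L M = {}"
      then have "(\<Sum>i<r. L i) \<le> (\<Sum>i<r. M i)"
        by (intro sum_mono) (auto simp: skew_cells_def not_less[symmetric])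
      with L(4) show False by simp
    qed
    with L assms show ?thesis
      unfolding I_def by (intro card_syt_skew_cells_eq_sum_addable)
  qed
  then have "skew_syt_count r M (Suc m) = (\<Sum>i\<in>I. \<Sum>L\<in>shapes_above r M (Suc m).
      if M i < L i then card (syt (skew_cells L (M(i := Suc (M i))))) else 0)"
    unfolding skew_syt_count_def by (simp add: sum.swap[of _ I])
  also have "\<dots> = (\<Sum>i\<in>I. skew_syt_count r (M(i := Suc (M i))) m)"
    by (intro sum.cong refl)
      (simp add: sum.inter_filter finite_shapes_above skew_syt_count_def I_def
        flip: shapes_above_Suc_filter)
  finally show ?thesis
    by (simp add: I_def)
qed

lemma shapes_above_0:
  assumes "antimono M" and "\<forall>i\<ge>r. M i = 0"
  shows "shapes_above r M 0 = {M}"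
proof -
  have "L = M" if "L \<in> shapes_above r M 0" for L
  proof
    fix i
    show "L i = M i"
    proof (cases "i < r")
      case True
      with that show ?thesis
        by (intro sum_mono_inv[of M "{..<r}" L, symmetric]) (auto simp: shapes_above_def)
    next
      case False
      with that assms(2) show ?thesis
        by (simp add: shapes_above_def)
    qed
  qed
  then show ?thesis
    using assms by (auto simp: shapes_above_def)
qed

lemma skew_syt_count_0:
  assumes "antimono M" and "\<forall>i\<ge>r. M i = 0"
  shows "skew_syt_count r M 0 = 1"
proof -
  have "skew_cells M M = {}"
    by (auto simp: skew_cells_def)
  with assms show ?thesis
    by (simp add: skew_syt_count_def shapes_above_0 syt_empty)
qed

lemma skew_syt_count_three_rows_Suc:
  assumes "antimono M"
  shows "skew_syt_count 3 M (Suc m) = skew_syt_count 3 (M(0 := Suc (M 0))) m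
    + (if M 1 < M 0 then skew_syt_count 3 (M(1 := Suc (M 1))) m else 0)
    + (if M 2 < M 1 then skew_syt_count 3 (M(2 := Suc (M 2))) m else 0)"
proof -
  have "skew_syt_count 3 M (Suc m) = (\<Sum>i\<in>{i \<in> {..<3}. i = 0 \<or> M i < M (i - 1)}.
      skew_syt_count 3 (M(i := Suc (M i))) m)"
    unfolding skew_syt_count_Suc[OF assms] by (rule sum.cong) auto
  also have "\<dots> = (\<Sum>i<3. if i = 0 \<or> M i < M (i - 1) then skew_syt_count 3 (M(i := Suc (M i))) m else 0)"
    by (rule sum.inter_filter) simp
  finally show ?thesis
    by (simp add: numeral_3_eq_3 numeral_2_eq_2)
qed

lemma skew_syt_count_three_rows:
  fixes M :: "nat \<Rightarrow> nat"
  assumes "antimono M" and "\<forall>i\<ge>3. M i = 0"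
  shows "int (skew_syt_count 3 M m) =
    moment_functional (motzkin_moments m) (r2_poly (Suc (M 1 - M 2)) (Suc (M 0 - M 1)))"
  using assms
proof (induction m arbitrary: M)
  case 0
  then show ?case
    by (simp add: skew_syt_count_0 moment_functional_r2_poly_0)
next
  case (Suc m)
  let ?M = "\<lambda>i. M(i := Suc (M i))"
  have IH: "int (skew_syt_count 3 (?M i) m) =
      moment_functional (motzkin_moments m) (r2_poly (Suc (?M i 1 - ?M i 2)) (Suc (?M i 0 - ?M i 1)))"
    if "i < 3" and "i = 0 \<or> M i < M (i - 1)" for i
    using that Suc.prems by (intro Suc.IH antimono_fun_upd_Suc) auto
  have mono: "M 1 \<le> M 0" "M 2 \<le> M 1"
    using antimonoD[OF Suc.prems(1), of 0 1] antimonoD[OF Suc.prems(1), of 1 2] by simp_all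
  define j k where "j = M 1 - M 2" and "k = M 0 - M 1"
  have "int (skew_syt_count 3 M (Suc m)) = int (skew_syt_count 3 (?M 0) m)
      + (if k = 0 then 0 else int (skew_syt_count 3 (?M 1) m))
      + (if j = 0 then 0 else int (skew_syt_count 3 (?M 2) m))"
    using mono by (simp add: skew_syt_count_three_rows_Suc[OF Suc.prems(1)] j_def k_def)
  moreover have "int (skew_syt_count 3 (?M 0) m) =
      moment_functional (motzkin_moments m) (r2_poly (Suc j) (Suc (Suc k)))"
    using IH[of 0] mono by (simp add: j_def k_def Suc_diff_le)
  moreover have "int (skew_syt_count 3 (?M 1) m) =
      moment_functional (motzkin_moments m) (r2_poly (Suc (Suc j)) k)" if "k \<noteq> 0"
    using IH[of 1] mono that by (simp add: j_def k_def Suc_diff_le Suc_diff_Suc)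
  moreover have "int (skew_syt_count 3 (?M 2) m) =
      moment_functional (motzkin_moments m) (r2_poly j (Suc k))" if "j \<noteq> 0"
    using IH[of 2] mono that by (simp add: j_def k_def Suc_diff_Suc)
  ultimately show ?case
    unfolding j_def[symmetric] k_def[symmetric] moment_functional_r2_poly_Suc by simp
qed

lemma skew_diagram_eq_skew_cells:
  "skew_diagram lam mu = skew_cells (nth_default 0 lam) (nth_default 0 mu)"
  by (auto simp: skew_diagram_def young_diagram_def skew_cells_def nth_default_def split: if_splits)

lemma antimono_nth_default_0:
  "sorted_wrt (\<ge>) xs \<Longrightarrow> antimono (nth_default (0::nat) xs)"
  unfolding antimono_iff_le_Suc by (auto simp: nth_default_def sorted_wrt_iff_nth_less)

lemma sum_nth_default_0:
  assumes "length xs \<le> r"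
  shows "(\<Sum>i<r. nth_default (0::nat) xs i) = sum_list xs"
proof -
  have "(\<Sum>i<r. nth_default 0 xs i) = (\<Sum>i<length xs. nth_default 0 xs i)"
    using assms by (intro sum.mono_neutral_right) (auto simp: nth_default_def)
  then show ?thesis
    by (simp add: sum_list_sum_nth atLeast0LessThan nth_default_def)
qed

lemma partition_in_shapes_above:
  assumes "is_partition lam n" and "length lam \<le> r" and "part_contains lam mu"
  shows "nth_default 0 lam \<in> shapes_above r (nth_default 0 mu) (n - sum_list mu)"
  unfolding shapes_above_def
proof (intro CollectI conjI allI impI)
  show "antimono (nth_default 0 lam)"
    using assms(1) by (intro antimono_nth_default_0) (simp add: is_partition_def)
  show "nth_default 0 lam i = 0" if "r \<le> i" for i
    using assms(2) that by (simp add: nth_default_def)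
  show mu_le: "nth_default 0 mu i \<le> nth_default 0 lam i" for i
    using assms(3) by (auto simp: part_contains_def nth_default_def)
  have "length mu \<le> r"
    using assms(2,3) by (simp add: part_contains_def)
  moreover have "sum_list mu \<le> n"
    using assms(1,3) mu_le sum_nth_default_0[of lam "length lam"] sum_nth_default_0[of mu "length lam"]
      sum_mono[of "{..<length lam}" "nth_default 0 mu" "nth_default 0 lam"]
    by (simp add: is_partition_def part_contains_def)
  ultimately show "(\<Sum>i<r. nth_default 0 lam i) = (\<Sum>i<r. nth_default 0 mu i) + (n - sum_list mu)"
    using assms(1,2) by (simp add: sum_nth_default_0 is_partition_def)
qed

lemma three_row_shape_as_partition:
  assumes L: "L \<in> shapes_above 3 (nth_default 0 [mu1, mu2]) (n - (mu1 + mu2))"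
    and "0 < mu2" and "mu1 + mu2 \<le> n"
  defines "lam \<equiv> if L 2 = 0 then [L 0, L 1] else [L 0, L 1, L 2]"
  shows "nth_default 0 lam = L"
    and "is_partition lam n \<and> length lam \<le> 3 \<and> part_contains lam [mu1, mu2]"
proof -
  have "antimono L" and zero: "\<forall>i\<ge>3. L i = 0"
    and contains: "\<forall>i. nth_default 0 [mu1, mu2] i \<le> L i"
    and "(\<Sum>i<3. L i) = (\<Sum>i<3. nth_default 0 [mu1, mu2] i) + (n - (mu1 + mu2))"
    using L by (simp_all add: shapes_above_def)
  then have "L 2 \<le> L 1" "L 1 \<le> L 0" "mu1 \<le> L 0" "mu2 \<le> L 1" "L 0 + L 1 + L 2 = n"
    using antimonoD[of L 1 2] antimonoD[of L 0 1] contains[rule_format, of 0]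
      contains[rule_format, of 1] assms(3)
    by (simp_all add: sum_nth_default_0 numeral_3_eq_3 numeral_2_eq_2)
  with assms(2) show "is_partition lam n \<and> length lam \<le> 3 \<and> part_contains lam [mu1, mu2]"
    by (auto simp: lam_def is_partition_def part_contains_def nth_Cons')
  show "nth_default 0 lam = L"
  proof
    fix i :: nat
    consider "i = 0" | "i = 1" | "i = 2" | "3 \<le> i"
      by linarith
    then show "nth_default 0 lam i = L i"
      using zero by cases (auto simp: lam_def nth_default_def)
  qed
qed

lemma length_2_or_3_cases:
  assumes "2 \<le> length xs" and "length xs \<le> 3"
  obtains a b where "xs = [a, b]" | a b c where "xs = [a, b, c]"
proof -
  obtain a b ys where xs: "xs = a # b # ys"
    using assms(1) by (cases xs rule: remdups_adj.cases) auto
  with assms(2) consider "ys = []" | c where "ys = [c]"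
    by (cases ys) auto
  with xs that show ?thesis by metis
qed

lemma sum_card_skew_SYT_three_rows:
  assumes "0 < mu2" and "mu2 \<le> mu1" and "mu1 + mu2 \<le> n"
  shows "(\<Sum>lam\<in>{lam. is_partition lam n \<and> length lam \<le> 3 \<and> part_contains lam [mu1, mu2]}.
            card (skew_SYT lam [mu1, mu2]))
       = skew_syt_count 3 (nth_default 0 [mu1, mu2]) (n - (mu1 + mu2))"
  unfolding skew_syt_count_def skew_SYT_eq_syt skew_diagram_eq_skew_cells
proof (rule sum.reindex_bij_witness[where j = "nth_default 0"
      and i = "\<lambda>L. if L 2 = 0 then [L 0, L 1] else [L 0, L 1, L 2]"])
  fix lam
  assume "lam \<in> {lam. is_partition lam n \<and> length lam \<le> 3 \<and> part_contains lam [mu1, mu2]}"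
  then have lam: "is_partition lam n" "length lam \<le> 3" "part_contains lam [mu1, mu2]"
    by simp_all
  then have "2 \<le> length lam"
    by (simp add: part_contains_def)
  from length_2_or_3_cases[OF this lam(2)]
  show "(if nth_default 0 lam 2 = 0 then [nth_default 0 lam 0, nth_default 0 lam 1]
      else [nth_default 0 lam 0, nth_default 0 lam 1, nth_default 0 lam 2]) = lam"
    using lam(1) by cases (auto simp: is_partition_def nth_default_def)
  show "nth_default 0 lam \<in> shapes_above 3 (nth_default 0 [mu1, mu2]) (n - (mu1 + mu2))"
    using partition_in_shapes_above[OF lam] by simp
qed (use three_row_shape_as_partition[OF _ assms(1,3)] in auto)

theorem theorem2p2:
  fixes mu1 mu2 n :: nat
  assumes "0 < mu2" and "mu2 \<le> mu1" and "mu1 + mu2 \<le> n"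
  shows "int (\<Sum>lam\<in>{lam. is_partition lam n \<and> length lam \<le> 3 \<and> part_contains lam [mu1, mu2]}.
              card (skew_SYT lam [mu1, mu2]))
       = (\<Sum>i\<le>degree (r2_poly (mu2 + 1) (mu1 - mu2 + 1)).
              coeff (r2_poly (mu2 + 1) (mu1 - mu2 + 1)) i * int (motzkin (i + n - (mu1 + mu2))))"
proof -
  let ?M = "nth_default 0 [mu1, mu2]"
  have "antimono ?M" and "\<forall>i\<ge>3. ?M i = 0"
    using assms(2) by (simp_all add: antimono_nth_default_0 nth_default_def)
  then have "int (skew_syt_count 3 ?M (n - (mu1 + mu2))) =
      moment_functional (motzkin_moments (n - (mu1 + mu2))) (r2_poly (mu2 + 1) (mu1 - mu2 + 1))"
    by (simp add: skew_syt_count_three_rows nth_default_def)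
  moreover have "i + n - (mu1 + mu2) = i + (n - (mu1 + mu2))" for i
    using assms(3) by simp
  ultimately show ?thesis
    by (simp add: sum_card_skew_SYT_three_rows[OF assms] moment_functional_def motzkin_moments_def)
qed

end
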